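(* Let $\Omega$ be a locally compact metrisable space and $\{\mu_n\}_{n\in\mathbb{N}}\cup\{\mu\}\subset\mathcal{M}(\Omega)$. Then $\mu_n^+\to\mu^+$ vaguely and $\mu_n^-\to\mu^-$ vaguely if and only if $\mu_n\to\mu$ vaguely and $\limsup_{n\to\infty}|\mu_n|(K)\le|\mu|(K)$ for every compact set $K\subset\Omega$.
   Context: $\Omega$ carries its Borel $\sigma$-algebra. $\mathcal{M}(\Omega)$ denotes the set of finite signed Radon measures on $\Omega$: finite signed Borel measures $\mu$ with Hahn–Jordan decomposition $\mu=\mu^+-\mu^-$ whose variation $|\mu|=\mu^++\mu^-$ satisfies $|\mu|(A)=\sup\{|\mu|(K):K\subset A,\ K\text{ compact}\}$ for all Borel $A$. Vague convergence $\nu_n\to\nu$ means $\int f\,d\nu_n\to\int f\,d\nu$ for all continuous $f:\Omega\to\mathbb{R}$ with compact support. *)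

theory Defs
  imports "HOL-Analysis.Analysis"
begin

text \<open>A finite signed Borel measure on the topological space 'a, given as a
real-valued (hence finite) countably additive set function on the Borel sets.\<close>
definition signed_borel_measure :: "('a::topological_space set \<Rightarrow> real) \<Rightarrow> bool" where
  "signed_borel_measure \<mu> \<longleftrightarrow> \<mu> {} = 0 \<and>
     (\<forall>A :: nat \<Rightarrow> 'a set. range A \<subseteq> sets borel \<longrightarrow> disjoint_family A \<longrightarrow>
        (\<lambda>i. \<mu> (A i)) sums \<mu> (\<Union>i. A i))"

definition pos_part :: "('a::topological_space set \<Rightarrow> real) \<Rightarrow> 'a set \<Rightarrow> real" where
  "pos_part \<mu> A = Sup {\<mu> B | B. B \<in> sets borel \<and> B \<subseteq> A}"

definition neg_part :: "('a::topological_space set \<Rightarrow> real) \<Rightarrow> 'a set \<Rightarrow> real" where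
  "neg_part \<mu> A = pos_part (\<lambda>B. - \<mu> B) A"

definition variation :: "('a::topological_space set \<Rightarrow> real) \<Rightarrow> 'a set \<Rightarrow> real" where
  "variation \<mu> A = pos_part \<mu> A + neg_part \<mu> A"

definition signed_radon_measure :: "('a::topological_space set \<Rightarrow> real) \<Rightarrow> bool" where
  "signed_radon_measure \<mu> \<longleftrightarrow> signed_borel_measure \<mu> \<and>
     (\<forall>A \<in> sets borel. variation \<mu> A = Sup {variation \<mu> K | K. compact K \<and> K \<subseteq> A})"

definition pos_measure :: "('a::topological_space set \<Rightarrow> real) \<Rightarrow> 'a measure" where
  "pos_measure \<mu> = measure_of UNIV (sets borel) (\<lambda>A. ennreal (pos_part \<mu> A))"

definition neg_measure :: "('a::topological_space set \<Rightarrow> real) \<Rightarrow> 'a measure" where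
  "neg_measure \<mu> = measure_of UNIV (sets borel) (\<lambda>A. ennreal (neg_part \<mu> A))"

definition signed_integral :: "('a::topological_space set \<Rightarrow> real) \<Rightarrow> ('a \<Rightarrow> real) \<Rightarrow> real" where
  "signed_integral \<mu> f = integral\<^sup>L (pos_measure \<mu>) f - integral\<^sup>L (neg_measure \<mu>) f"

definition vague_conv :: "(nat \<Rightarrow> 'a::topological_space set \<Rightarrow> real) \<Rightarrow> ('a set \<Rightarrow> real) \<Rightarrow> bool" where
  "vague_conv \<nu>s \<nu> \<longleftrightarrow>
     (\<forall>f :: 'a \<Rightarrow> real. continuous_on UNIV f \<longrightarrow> compact (closure {x. f x \<noteq> 0}) \<longrightarrow>
        (\<lambda>n. signed_integral (\<nu>s n) f) \<longlonglongrightarrow> signed_integral \<nu> f)"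

end

theory Submission
  imports Defs
begin

lemma signed_borel_measure_empty: "signed_borel_measure \<mu> \<Longrightarrow> \<mu> {} = 0"
  by (simp add: signed_borel_measure_def)

lemma signed_borel_measure_sums:
  "signed_borel_measure \<mu> \<Longrightarrow> range A \<subseteq> sets borel \<Longrightarrow> disjoint_family A \<Longrightarrow>
   (\<lambda>i. \<mu> (A i)) sums \<mu> (\<Union>i. A i)"
  by (simp add: signed_borel_measure_def)

lemma signed_borel_measure_uminus:
  "signed_borel_measure \<mu> \<Longrightarrow> signed_borel_measure (\<lambda>A. - \<mu> A)"
  unfolding signed_borel_measure_def by (auto intro: sums_minus)

lemma signed_borel_measure_Un:
  assumes \<mu>: "signed_borel_measure \<mu>" and "A \<in> sets borel" "B \<in> sets borel" "A \<inter> B = {}"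
  shows "\<mu> (A \<union> B) = \<mu> A + \<mu> B"
proof -
  have "disjoint_family (binaryset A B)"
    using assms(4) by (auto simp: disjoint_family_on_def binaryset_def)
  then have "(\<lambda>i. \<mu> (binaryset A B i)) sums \<mu> (A \<union> B)"
    using signed_borel_measure_sums[OF \<mu>, of "binaryset A B"] assms(2,3)
    by (simp add: range_binaryset_eq UN_binaryset_eq)
  then show ?thesis
    using binaryset_sums[of \<mu>] signed_borel_measure_empty[OF \<mu>] sums_unique2 by blast
qed

lemma signed_borel_measure_Diff:
  assumes \<mu>: "signed_borel_measure \<mu>" and "A \<in> sets borel" "B \<in> sets borel" "B \<subseteq> A"
  shows "\<mu> (A - B) = \<mu> A - \<mu> B"
proof -
  have "\<mu> A = \<mu> (A - B) + \<mu> B"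
    using signed_borel_measure_Un[OF \<mu>, of "A - B" B] assms by (auto simp: Un_absorb2)
  then show ?thesis by simp
qed

lemma signed_borel_measure_split:
  assumes \<mu>: "signed_borel_measure \<mu>" and "A \<in> sets borel" "B \<in> sets borel"
  shows "\<mu> A = \<mu> (A \<inter> B) + \<mu> (A - B)"
  using signed_borel_measure_Un[OF \<mu>, of "A \<inter> B" "A - B"] assms by (auto simp: Int_Diff_Un)

text \<open>A set is \<open>unbounded\<close> if the values of \<open>\<mu>\<close> on its Borel subsets are unbounded above.
  An unbounded set contains an unbounded subset whose complement in it has measure at
  least \<open>1\<close> in absolute value; iterating this yields disjoint Borel sets whose measures do
  not tend to \<open>0\<close>, contradicting countable additivity.\<close>

lemma signed_borel_measure_unbounded_split:
  assumes \<mu>: "signed_borel_measure \<mu>" and E: "E \<in> sets borel"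
    and unb: "\<not> bdd_above {\<mu> C | C. C \<in> sets borel \<and> C \<subseteq> E}"
  obtains E' where "E' \<in> sets borel" "E' \<subseteq> E" "1 \<le> \<bar>\<mu> (E - E')\<bar>"
    "\<not> bdd_above {\<mu> C | C. C \<in> sets borel \<and> C \<subseteq> E'}"
proof -
  obtain C where C: "C \<in> sets borel" "C \<subseteq> E" "\<bar>\<mu> E\<bar> + 1 < \<mu> C"
    using unb unfolding bdd_above_def by (auto simp: not_le)
  have "\<not> bdd_above {\<mu> D | D. D \<in> sets borel \<and> D \<subseteq> C} \<or>
        \<not> bdd_above {\<mu> D | D. D \<in> sets borel \<and> D \<subseteq> E - C}"
  proof (rule ccontr)
    assume "\<not> ?thesis"
    then obtain b1 b2 where
      b1: "\<And>D. D \<in> sets borel \<Longrightarrow> D \<subseteq> C \<Longrightarrow> \<mu> D \<le> b1" and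
      b2: "\<And>D. D \<in> sets borel \<Longrightarrow> D \<subseteq> E - C \<Longrightarrow> \<mu> D \<le> b2"
      unfolding bdd_above_def by blast
    have "\<mu> D \<le> b1 + b2" if "D \<in> sets borel" "D \<subseteq> E" for D
      using signed_borel_measure_split[OF \<mu> that(1) C(1)] b1[of "D \<inter> C"] b2[of "D - C"] that C(1)
      by fastforce
    then show False
      using unb by (auto simp: bdd_above_def)
  qed
  moreover have "\<mu> (E - C) = \<mu> E - \<mu> C"
    by (rule signed_borel_measure_Diff[OF \<mu> E C(1,2)])
  moreover have "E - (E - C) = C"
    using C(2) by auto
  ultimately show ?thesis
    using that[of C] that[of "E - C"] C E by force
qed

lemma signed_borel_measure_bdd_above:
  assumes \<mu>: "signed_borel_measure \<mu>"
  shows "bdd_above {\<mu> B | B. B \<in> sets borel \<and> B \<subseteq> A}"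
proof (rule ccontr)
  define unbounded where
    "unbounded E \<longleftrightarrow> E \<in> sets borel \<and> \<not> bdd_above {\<mu> C | C. C \<in> sets borel \<and> C \<subseteq> E}" for E
  assume "\<not> ?thesis"
  then have "\<not> bdd_above {\<mu> C | C. C \<in> sets borel \<and> C \<subseteq> UNIV}"
    by (rule contrapos_nn) (erule bdd_above_mono, blast)
  then have "unbounded UNIV"
    by (simp add: unbounded_def)
  moreover have step: "\<exists>E'. unbounded E' \<and> E' \<subseteq> E \<and> 1 \<le> \<bar>\<mu> (E - E')\<bar>"
    if "unbounded E" for E
  proof -
    from that have "E \<in> sets borel" "\<not> bdd_above {\<mu> C | C. C \<in> sets borel \<and> C \<subseteq> E}"
      by (simp_all add: unbounded_def)
    from signed_borel_measure_unbounded_split[OF \<mu> this] obtain E' where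
      "E' \<in> sets borel" "E' \<subseteq> E" "1 \<le> \<bar>\<mu> (E - E')\<bar>"
      "\<not> bdd_above {\<mu> C | C. C \<in> sets borel \<and> C \<subseteq> E'}" .
    then show ?thesis
      by (intro exI[of _ E']) (simp add: unbounded_def)
  qed
  ultimately have "\<exists>E. \<forall>n. unbounded (E n) \<and> E (Suc n) \<subseteq> E n \<and> 1 \<le> \<bar>\<mu> (E n - E (Suc n))\<bar>"
    by (intro dependent_nat_choice) auto
  then obtain E where E: "\<And>n. unbounded (E n)"
    "\<And>n. E (Suc n) \<subseteq> E n" "\<And>n. 1 \<le> \<bar>\<mu> (E n - E (Suc n))\<bar>"
    by blast
  define D where "D n = - E n" for n
  have D: "D (Suc n) - D n = E n - E (Suc n)" for n
    by (auto simp: D_def)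
  have "disjoint_family (\<lambda>n. D (Suc n) - D n)"
    by (rule disjoint_family_Suc) (use E(2) in \<open>auto simp: D_def\<close>)
  moreover have "range (\<lambda>n. D (Suc n) - D n) \<subseteq> sets borel"
    using E(1) by (auto simp: D unbounded_def)
  ultimately have "summable (\<lambda>n. \<mu> (D (Suc n) - D n))"
    by (intro sums_summable[OF signed_borel_measure_sums[OF \<mu>]])
  then have "(\<lambda>n. \<mu> (E n - E (Suc n))) \<longlonglongrightarrow> 0"
    unfolding D by (rule summable_LIMSEQ_zero)
  from LIMSEQ_D[OF this zero_less_one] obtain n where "\<bar>\<mu> (E n - E (Suc n))\<bar> < 1"
    by auto
  with E(3)[of n] show False
    by linarith
qed

lemma pos_part_upper:
  "signed_borel_measure \<mu> \<Longrightarrow> B \<in> sets borel \<Longrightarrow> B \<subseteq> A \<Longrightarrow> \<mu> B \<le> pos_part \<mu> A"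
  unfolding pos_part_def by (intro cSup_upper signed_borel_measure_bdd_above) auto

lemma pos_part_least:
  "(\<And>B. B \<in> sets borel \<Longrightarrow> B \<subseteq> A \<Longrightarrow> \<mu> B \<le> c) \<Longrightarrow> pos_part \<mu> A \<le> c"
  unfolding pos_part_def by (intro cSup_least) auto

lemma pos_part_nonneg: "signed_borel_measure \<mu> \<Longrightarrow> 0 \<le> pos_part \<mu> A"
  using pos_part_upper[of \<mu> "{}" A] signed_borel_measure_empty[of \<mu>] by simp

lemma pos_part_empty: "signed_borel_measure \<mu> \<Longrightarrow> pos_part \<mu> {} = 0"
  by (intro antisym pos_part_least pos_part_nonneg) (auto simp: signed_borel_measure_empty)

lemma pos_part_approx:
  assumes "0 < e"
  obtains B where "B \<in> sets borel" "B \<subseteq> A" "pos_part \<mu> A - e < \<mu> B"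
proof -
  have "pos_part \<mu> A - e < Sup {\<mu> B | B. B \<in> sets borel \<and> B \<subseteq> A}"
    using assms by (simp add: pos_part_def)
  from less_cSupD[OF _ this] that show ?thesis by auto
qed

lemma pos_part_mono:
  "signed_borel_measure \<mu> \<Longrightarrow> A \<subseteq> A' \<Longrightarrow> pos_part \<mu> A \<le> pos_part \<mu> A'"
  by (intro pos_part_least pos_part_upper) auto

lemma pos_part_Un:
  assumes \<mu>: "signed_borel_measure \<mu>" and A: "A \<in> sets borel" and B: "B \<in> sets borel"
    and disj: "A \<inter> B = {}"
  shows "pos_part \<mu> (A \<union> B) = pos_part \<mu> A + pos_part \<mu> B"
proof (rule antisym)
  show "pos_part \<mu> (A \<union> B) \<le> pos_part \<mu> A + pos_part \<mu> B"
  proof (rule pos_part_least)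
    fix C assume C: "C \<in> sets borel" "C \<subseteq> A \<union> B"
    have "\<mu> C = \<mu> (C \<inter> A) + \<mu> (C - A)"
      by (rule signed_borel_measure_split[OF \<mu> C(1) A])
    also have "\<dots> \<le> pos_part \<mu> A + pos_part \<mu> B"
      using C A by (intro add_mono pos_part_upper[OF \<mu>]) auto
    finally show "\<mu> C \<le> pos_part \<mu> A + pos_part \<mu> B" .
  qed
  have "\<mu> C + \<mu> D \<le> pos_part \<mu> (A \<union> B)"
    if "C \<in> sets borel" "C \<subseteq> A" "D \<in> sets borel" "D \<subseteq> B" for C D
  proof -
    have "C \<inter> D = {}"
      using that disj by auto
    then have "\<mu> (C \<union> D) = \<mu> C + \<mu> D"
      using signed_borel_measure_Un[OF \<mu>] that by blast
    moreover have "\<mu> (C \<union> D) \<le> pos_part \<mu> (A \<union> B)"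
      using that by (intro pos_part_upper[OF \<mu>]) auto
    ultimately show ?thesis by simp
  qed
  then have "pos_part \<mu> A \<le> pos_part \<mu> (A \<union> B) - \<mu> D" if "D \<in> sets borel" "D \<subseteq> B" for D
    using that by (intro pos_part_least) fastforce
  then have "pos_part \<mu> B \<le> pos_part \<mu> (A \<union> B) - pos_part \<mu> A"
    by (intro pos_part_least) fastforce
  then show "pos_part \<mu> A + pos_part \<mu> B \<le> pos_part \<mu> (A \<union> B)"
    by simp
qed

lemma pos_part_Diff:
  assumes \<mu>: "signed_borel_measure \<mu>" and "A \<in> sets borel" "C \<in> sets borel" "C \<subseteq> A"
  shows "pos_part \<mu> (A - C) = pos_part \<mu> A - pos_part \<mu> C"
proof -
  have "pos_part \<mu> A = pos_part \<mu> (A - C) + pos_part \<mu> C"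
    using pos_part_Un[OF \<mu>, of "A - C" C] assms by (auto simp: Un_absorb2)
  then show ?thesis by simp
qed

lemma pos_part_subadditive:
  assumes \<mu>: "signed_borel_measure \<mu>" and "A \<in> sets borel" "B \<in> sets borel"
  shows "pos_part \<mu> (A \<union> B) \<le> pos_part \<mu> A + pos_part \<mu> B"
  using pos_part_Un[OF \<mu>, of A "B - A"] pos_part_mono[OF \<mu>, of "B - A" B] assms by auto

lemma pos_part_sums:
  assumes \<mu>: "signed_borel_measure \<mu>" and A: "range A \<subseteq> sets borel" "disjoint_family A"
  shows "(\<lambda>i. pos_part \<mu> (A i)) sums pos_part \<mu> (\<Union>i. A i)"
proof -
  have partial: "(\<Sum>i<n. pos_part \<mu> (A i)) = pos_part \<mu> (\<Union>i<n. A i)" for n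
  proof (induction n)
    case (Suc n)
    have "(\<Union>i<n. A i) \<inter> A n = {}"
      using A(2) by (auto simp: disjoint_family_on_def) (metis IntI empty_iff less_irrefl)
    then have "pos_part \<mu> ((\<Union>i<n. A i) \<union> A n) = pos_part \<mu> (\<Union>i<n. A i) + pos_part \<mu> (A n)"
      using A(1) by (intro pos_part_Un[OF \<mu>]) auto
    moreover have "(\<Union>i<Suc n. A i) = (\<Union>i<n. A i) \<union> A n"
      by (auto simp: lessThan_Suc)
    ultimately show ?case
      using Suc by simp
  qed (simp add: pos_part_empty[OF \<mu>])
  then have bound: "(\<Sum>i<n. pos_part \<mu> (A i)) \<le> pos_part \<mu> (\<Union>i. A i)" for n
    by (auto intro: pos_part_mono[OF \<mu>])
  have summable: "summable (\<lambda>i. pos_part \<mu> (A i))"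
    by (rule summableI_nonneg_bounded[OF pos_part_nonneg[OF \<mu>] bound])
  have "\<mu> C \<le> (\<Sum>i. pos_part \<mu> (A i))" if C: "C \<in> sets borel" "C \<subseteq> (\<Union>i. A i)" for C
  proof -
    have "disjoint_family (\<lambda>i. C \<inter> A i)"
      using A(2) by (auto simp: disjoint_family_on_def)
    then have "(\<lambda>i. \<mu> (C \<inter> A i)) sums \<mu> (\<Union>i. C \<inter> A i)"
      using C A(1) by (intro signed_borel_measure_sums[OF \<mu>]) auto
    moreover have "(\<Union>i. C \<inter> A i) = C"
      using C by auto
    ultimately have "(\<lambda>i. \<mu> (C \<inter> A i)) sums \<mu> C"
      by simp
    moreover have "\<mu> (C \<inter> A i) \<le> pos_part \<mu> (A i)" for i
      using C A(1) by (intro pos_part_upper[OF \<mu>]) auto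
    ultimately show ?thesis
      using summable by (metis sums_iff suminf_le)
  qed
  then have "pos_part \<mu> (\<Union>i. A i) \<le> (\<Sum>i. pos_part \<mu> (A i))"
    by (rule pos_part_least)
  with summable suminf_le_const[OF summable bound] show ?thesis
    by (simp add: sums_iff)
qed

lemma neg_part_eq_pos_part_uminus: "neg_part \<mu> = pos_part (\<lambda>B. - \<mu> B)"
  by (simp add: neg_part_def[abs_def])

lemma neg_part_nonneg: "signed_borel_measure \<mu> \<Longrightarrow> 0 \<le> neg_part \<mu> A"
  by (simp add: neg_part_def pos_part_nonneg signed_borel_measure_uminus)

lemma neg_part_mono:
  "signed_borel_measure \<mu> \<Longrightarrow> A \<subseteq> A' \<Longrightarrow> neg_part \<mu> A \<le> neg_part \<mu> A'"
  by (simp add: neg_part_def pos_part_mono signed_borel_measure_uminus)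

lemma neg_part_Diff:
  "signed_borel_measure \<mu> \<Longrightarrow> A \<in> sets borel \<Longrightarrow> C \<in> sets borel \<Longrightarrow> C \<subseteq> A \<Longrightarrow>
   neg_part \<mu> (A - C) = neg_part \<mu> A - neg_part \<mu> C"
  by (simp add: neg_part_def pos_part_Diff signed_borel_measure_uminus)

lemma neg_part_subadditive:
  "signed_borel_measure \<mu> \<Longrightarrow> A \<in> sets borel \<Longrightarrow> B \<in> sets borel \<Longrightarrow>
   neg_part \<mu> (A \<union> B) \<le> neg_part \<mu> A + neg_part \<mu> B"
  by (simp add: neg_part_def pos_part_subadditive signed_borel_measure_uminus)

lemma jordan_decomposition:
  assumes \<mu>: "signed_borel_measure \<mu>" and A: "A \<in> sets borel"
  shows "\<mu> A = pos_part \<mu> A - neg_part \<mu> A"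
proof (rule antisym)
  have "- \<mu> B \<le> pos_part \<mu> A - \<mu> A" if "B \<in> sets borel" "B \<subseteq> A" for B
    using signed_borel_measure_Diff[OF \<mu> A that] pos_part_upper[OF \<mu>, of "A - B" A] that A
    by auto
  then have "neg_part \<mu> A \<le> pos_part \<mu> A - \<mu> A"
    unfolding neg_part_def by (rule pos_part_least)
  then show "\<mu> A \<le> pos_part \<mu> A - neg_part \<mu> A"
    by simp
  have "\<mu> B \<le> \<mu> A + neg_part \<mu> A" if "B \<in> sets borel" "B \<subseteq> A" for B
    using signed_borel_measure_Diff[OF \<mu> A that]
      pos_part_upper[OF signed_borel_measure_uminus[OF \<mu>], of "A - B" A] that A
    by (auto simp: neg_part_def)
  then have "pos_part \<mu> A \<le> \<mu> A + neg_part \<mu> A"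
    by (rule pos_part_least)
  then show "pos_part \<mu> A - neg_part \<mu> A \<le> \<mu> A"
    by simp
qed

lemma pos_part_pos_part:
  assumes \<mu>: "signed_borel_measure \<mu>"
  shows "pos_part (pos_part \<mu>) = pos_part \<mu>"
proof
  fix A
  have "pos_part \<mu> B \<le> pos_part (pos_part \<mu>) A" if "B \<in> sets borel" "B \<subseteq> A" for B
    unfolding pos_part_def[of "pos_part \<mu>"] using that
    by (intro cSup_upper bdd_aboveI[of _ "pos_part \<mu> A"]) (auto intro: pos_part_mono[OF \<mu>])
  then have "pos_part \<mu> A \<le> pos_part (pos_part \<mu>) A"
    by (intro pos_part_least) (meson order_trans pos_part_upper[OF \<mu>] order_refl)
  moreover have "pos_part (pos_part \<mu>) A \<le> pos_part \<mu> A"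
    by (intro pos_part_least pos_part_mono[OF \<mu>])
  ultimately show "pos_part (pos_part \<mu>) A = pos_part \<mu> A"
    by simp
qed

lemma neg_part_pos_part:
  assumes \<mu>: "signed_borel_measure \<mu>"
  shows "neg_part (pos_part \<mu>) A = 0"
proof (rule antisym)
  show "neg_part (pos_part \<mu>) A \<le> 0"
    unfolding neg_part_def by (intro pos_part_least) (simp add: pos_part_nonneg[OF \<mu>])
  have "- pos_part \<mu> {} \<le> neg_part (pos_part \<mu>) A"
    unfolding neg_part_def pos_part_def[of "\<lambda>B. - pos_part \<mu> B"]
    by (intro cSup_upper bdd_aboveI[of _ 0]) (auto simp: pos_part_nonneg[OF \<mu>])
  then show "0 \<le> neg_part (pos_part \<mu>) A"
    by (simp add: pos_part_empty[OF \<mu>])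
qed

lemma variation_nonneg: "signed_borel_measure \<mu> \<Longrightarrow> 0 \<le> variation \<mu> A"
  by (simp add: variation_def pos_part_nonneg neg_part_nonneg)

lemma variation_mono:
  "signed_borel_measure \<mu> \<Longrightarrow> A \<subseteq> A' \<Longrightarrow> variation \<mu> A \<le> variation \<mu> A'"
  by (simp add: variation_def add_mono pos_part_mono neg_part_mono)

lemma variation_Diff:
  "signed_borel_measure \<mu> \<Longrightarrow> A \<in> sets borel \<Longrightarrow> C \<in> sets borel \<Longrightarrow> C \<subseteq> A \<Longrightarrow>
   variation \<mu> (A - C) = variation \<mu> A - variation \<mu> C"
  by (simp add: variation_def pos_part_Diff neg_part_Diff)

lemma pos_part_le_variation: "signed_borel_measure \<mu> \<Longrightarrow> pos_part \<mu> A \<le> variation \<mu> A"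
  by (simp add: variation_def neg_part_nonneg)

lemma neg_part_le_variation: "signed_borel_measure \<mu> \<Longrightarrow> neg_part \<mu> A \<le> variation \<mu> A"
  by (simp add: variation_def pos_part_nonneg)

lemma sets_pos_measure [simp]: "sets (pos_measure \<mu>) = sets borel"
  unfolding pos_measure_def
  by (simp add: sigma_algebra.sigma_sets_eq[OF sets.sigma_algebra_axioms[of borel, simplified]])

lemma space_pos_measure [simp]: "space (pos_measure \<mu>) = UNIV"
  unfolding pos_measure_def by (rule space_measure_of) auto

lemma measurable_pos_measure [simp]: "measurable (pos_measure \<mu>) N = measurable borel N"
  by (rule measurable_cong_sets) auto

lemma emeasure_pos_measure:
  assumes \<mu>: "signed_borel_measure \<mu>" and A: "A \<in> sets borel"
  shows "emeasure (pos_measure \<mu>) A = ennreal (pos_part \<mu> A)"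
proof -
  have "countably_additive (sets borel) (\<lambda>A. ennreal (pos_part \<mu> A))"
    unfolding countably_additive_def
  proof (intro allI impI)
    fix F :: "nat \<Rightarrow> 'a set"
    assume "range F \<subseteq> sets borel" "disjoint_family F"
    then have sums: "(\<lambda>i. pos_part \<mu> (F i)) sums pos_part \<mu> (\<Union>i. F i)"
      by (rule pos_part_sums[OF \<mu>])
    then show "(\<Sum>i. ennreal (pos_part \<mu> (F i))) = ennreal (pos_part \<mu> (\<Union>i. F i))"
      by (simp add: suminf_ennreal2 pos_part_nonneg[OF \<mu>] sums_summable sums_unique[symmetric])
  qed
  moreover have "positive (sets borel) (\<lambda>A. ennreal (pos_part \<mu> A))"
    by (simp add: positive_def pos_part_empty[OF \<mu>])
  ultimately show ?thesis
    unfolding pos_measure_def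
    using emeasure_measure_of_sigma[OF sets.sigma_algebra_axioms[of borel, simplified]] A by blast
qed

lemma finite_measure_pos_measure:
  "signed_borel_measure \<mu> \<Longrightarrow> finite_measure (pos_measure \<mu>)"
  by (rule finite_measureI) (simp add: emeasure_pos_measure)

lemma measure_pos_measure:
  "signed_borel_measure \<mu> \<Longrightarrow> A \<in> sets borel \<Longrightarrow> measure (pos_measure \<mu>) A = pos_part \<mu> A"
  by (simp add: measure_def emeasure_pos_measure pos_part_nonneg)

lemma neg_measure_eq_pos_measure_uminus: "neg_measure \<mu> = pos_measure (\<lambda>B. - \<mu> B)"
  by (simp add: neg_measure_def pos_measure_def neg_part_def)

lemma signed_integral_pos_part:
  assumes \<mu>: "signed_borel_measure \<mu>"
  shows "signed_integral (pos_part \<mu>) f = integral\<^sup>L (pos_measure \<mu>) f"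
proof -
  have "neg_measure (pos_part \<mu>) = null_measure borel"
    by (simp add: neg_measure_def neg_part_pos_part[OF \<mu>] null_measure_def)
  then show ?thesis
    by (simp add: signed_integral_def pos_measure_def pos_part_pos_part[OF \<mu>])
qed

lemma signed_integral_neg_part:
  "signed_borel_measure \<mu> \<Longrightarrow> signed_integral (neg_part \<mu>) f = integral\<^sup>L (neg_measure \<mu>) f"
  using signed_integral_pos_part[OF signed_borel_measure_uminus]
  by (simp add: neg_part_eq_pos_part_uminus neg_measure_eq_pos_measure_uminus)

lemma (in finite_measure) integral_le_indicator_combination:
  fixes f :: "'a \<Rightarrow> real"
  assumes f: "f \<in> borel_measurable M" "\<And>x. \<bar>f x\<bar> \<le> c" and sets: "A \<in> sets M" "B \<in> sets M"
    and le: "\<And>x. f x \<le> a * indicator A x + b * indicator B x"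
  shows "integral\<^sup>L M f \<le> a * measure M A + b * measure M B"
proof -
  have "integrable M (\<lambda>x. a * indicator A x + b * indicator B x)"
    using sets by (intro integrable_const_bound[where B="\<bar>a\<bar> + \<bar>b\<bar>"]) (auto simp: indicator_def)
  moreover have "integrable M f"
    using f by (intro integrable_const_bound[where B=c]) auto
  ultimately have "integral\<^sup>L M f \<le> integral\<^sup>L M (\<lambda>x. a * indicator A x + b * indicator B x)"
    using le by (intro integral_mono)
  also have "\<dots> = a * measure M A + b * measure M B"
    using sets
    by (subst Bochner_Integration.integral_add)
       (auto simp: sets.Int_space_eq2 emeasure_finite less_top[symmetric])
  finally show ?thesis .
qed

lemma (in finite_measure) integral_ge_indicator_combination:
  fixes f :: "'a \<Rightarrow> real"
  assumes f: "f \<in> borel_measurable M" "\<And>x. \<bar>f x\<bar> \<le> c" and sets: "A \<in> sets M" "B \<in> sets M"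
    and ge: "\<And>x. a * indicator A x + b * indicator B x \<le> f x"
  shows "a * measure M A + b * measure M B \<le> integral\<^sup>L M f"
proof -
  have "integral\<^sup>L M (\<lambda>x. - f x) \<le> - a * measure M A + - b * measure M B"
  proof (rule integral_le_indicator_combination)
    show "- f x \<le> - a * indicator A x + - b * indicator B x" for x
      using ge[of x] by linarith
  qed (use f sets in auto)
  then show ?thesis
    by simp
qed

lemma integrable_pos_measure:
  fixes f :: "'a::topological_space \<Rightarrow> real"
  assumes "signed_borel_measure \<mu>" "f \<in> borel_measurable borel" "\<And>x. \<bar>f x\<bar> \<le> c"
  shows "integrable (pos_measure \<mu>) f"
  using assms by (intro finite_measure.integrable_const_bound[where B=c] finite_measure_pos_measure) auto

lemma integrable_neg_measure:
  fixes f :: "'a::topological_space \<Rightarrow> real"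
  assumes "signed_borel_measure \<mu>" "f \<in> borel_measurable borel" "\<And>x. \<bar>f x\<bar> \<le> c"
  shows "integrable (neg_measure \<mu>) f"
  unfolding neg_measure_eq_pos_measure_uminus
  using assms by (intro integrable_pos_measure signed_borel_measure_uminus)

definition variation_integral :: "('a::topological_space set \<Rightarrow> real) \<Rightarrow> ('a \<Rightarrow> real) \<Rightarrow> real" where
  "variation_integral \<mu> f = integral\<^sup>L (pos_measure \<mu>) f + integral\<^sup>L (neg_measure \<mu>) f"

lemma integral_pos_measure_le:
  fixes f :: "'a::topological_space \<Rightarrow> real"
  assumes \<mu>: "signed_borel_measure \<mu>" and f: "f \<in> borel_measurable borel" "\<And>x. \<bar>f x\<bar> \<le> c"
    and sets: "A \<in> sets borel" "B \<in> sets borel"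
    and le: "\<And>x. f x \<le> a * indicator A x + b * indicator B x"
  shows "integral\<^sup>L (pos_measure \<mu>) f \<le> a * pos_part \<mu> A + b * pos_part \<mu> B"
  using finite_measure.integral_le_indicator_combination[OF finite_measure_pos_measure[OF \<mu>],
      of f c A B a b] assms
  by (simp add: measure_pos_measure)

lemma integral_pos_measure_ge:
  fixes f :: "'a::topological_space \<Rightarrow> real"
  assumes \<mu>: "signed_borel_measure \<mu>" and f: "f \<in> borel_measurable borel" "\<And>x. \<bar>f x\<bar> \<le> c"
    and sets: "A \<in> sets borel" "B \<in> sets borel"
    and ge: "\<And>x. a * indicator A x + b * indicator B x \<le> f x"
  shows "a * pos_part \<mu> A + b * pos_part \<mu> B \<le> integral\<^sup>L (pos_measure \<mu>) f"
  using finite_measure.integral_ge_indicator_combination[OF finite_measure_pos_measure[OF \<mu>],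
      of f c A B a b] assms
  by (simp add: measure_pos_measure)

lemma integral_neg_measure_le:
  fixes f :: "'a::topological_space \<Rightarrow> real"
  assumes "signed_borel_measure \<mu>" "f \<in> borel_measurable borel" "\<And>x. \<bar>f x\<bar> \<le> c"
    "A \<in> sets borel" "B \<in> sets borel" "\<And>x. f x \<le> a * indicator A x + b * indicator B x"
  shows "integral\<^sup>L (neg_measure \<mu>) f \<le> a * neg_part \<mu> A + b * neg_part \<mu> B"
  using integral_pos_measure_le[OF signed_borel_measure_uminus[OF assms(1)] assms(2-6)]
  by (simp add: neg_measure_eq_pos_measure_uminus neg_part_eq_pos_part_uminus)

lemma integral_neg_measure_ge:
  fixes f :: "'a::topological_space \<Rightarrow> real"
  assumes "signed_borel_measure \<mu>" "f \<in> borel_measurable borel" "\<And>x. \<bar>f x\<bar> \<le> c"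
    "A \<in> sets borel" "B \<in> sets borel" "\<And>x. a * indicator A x + b * indicator B x \<le> f x"
  shows "a * neg_part \<mu> A + b * neg_part \<mu> B \<le> integral\<^sup>L (neg_measure \<mu>) f"
  using integral_pos_measure_ge[OF signed_borel_measure_uminus[OF assms(1)] assms(2-6)]
  by (simp add: neg_measure_eq_pos_measure_uminus neg_part_eq_pos_part_uminus)

lemma variation_integral_le_indicator:
  fixes f :: "'a::topological_space \<Rightarrow> real"
  assumes "signed_borel_measure \<mu>" "f \<in> borel_measurable borel" "\<And>x. \<bar>f x\<bar> \<le> c"
    "A \<in> sets borel" "\<And>x. f x \<le> a * indicator A x"
  shows "variation_integral \<mu> f \<le> a * variation \<mu> A"
  using integral_pos_measure_le[of \<mu> f c A "{}" a 0] integral_neg_measure_le[of \<mu> f c A "{}" a 0] assms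
  by (simp add: variation_integral_def variation_def distrib_left)

lemma variation_integral_ge_indicator:
  fixes f :: "'a::topological_space \<Rightarrow> real"
  assumes "signed_borel_measure \<mu>" "f \<in> borel_measurable borel" "\<And>x. \<bar>f x\<bar> \<le> c"
    "A \<in> sets borel" "\<And>x. a * indicator A x \<le> f x"
  shows "a * variation \<mu> A \<le> variation_integral \<mu> f"
  using integral_pos_measure_ge[of \<mu> f c A "{}" a 0] integral_neg_measure_ge[of \<mu> f c A "{}" a 0] assms
  by (simp add: variation_integral_def variation_def distrib_left)

lemma variation_integral_sum:
  fixes g :: "'i \<Rightarrow> 'a::topological_space \<Rightarrow> real"
  assumes "signed_borel_measure \<mu>" "\<And>k. g k \<in> borel_measurable borel" "\<And>k x. \<bar>g k x\<bar> \<le> c"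
  shows "variation_integral \<mu> (\<lambda>x. \<Sum>k\<in>I. g k x) = (\<Sum>k\<in>I. variation_integral \<mu> (g k))"
  using integrable_pos_measure[OF assms] integrable_neg_measure[OF assms]
  by (simp add: variation_integral_def sum.distrib Bochner_Integration.integral_sum)

lemma variation_integral_diff:
  fixes f g :: "'a::topological_space \<Rightarrow> real"
  assumes "signed_borel_measure \<mu>" "f \<in> borel_measurable borel" "\<And>x. \<bar>f x\<bar> \<le> c"
    "g \<in> borel_measurable borel" "\<And>x. \<bar>g x\<bar> \<le> d"
  shows "variation_integral \<mu> (\<lambda>x. f x - g x) = variation_integral \<mu> f - variation_integral \<mu> g"
  using integrable_pos_measure[OF assms(1,2,3)] integrable_neg_measure[OF assms(1,2,3)]
    integrable_pos_measure[OF assms(1,4,5)] integrable_neg_measure[OF assms(1,4,5)]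
  by (simp add: variation_integral_def Bochner_Integration.integral_diff)

lemma Hausdorff_compact_imp_closed:
  "Hausdorff_space (euclidean :: 'a::topological_space topology) \<Longrightarrow> compact (K :: 'a set) \<Longrightarrow> closed K"
  unfolding closed_closedin by (rule compactin_imp_closedin) simp_all

lemma Hausdorff_compact_imp_borel:
  "Hausdorff_space (euclidean :: 'a::topological_space topology) \<Longrightarrow> compact (K :: 'a set) \<Longrightarrow>
   K \<in> sets borel"
  by (intro borel_closed Hausdorff_compact_imp_closed)

lemma compact_closure_subset:
  fixes A B :: "'a::topological_space set"
  assumes "compact (closure A)" "B \<subseteq> A"
  shows "compact (closure B)"
proof -
  have "closure B = closure A \<inter> closure B"
    using closure_mono[OF assms(2)] by blast
  then show ?thesis
    by (metis compact_Int_closed[OF assms(1) closed_closure])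
qed

lemma continuous_compact_support_bounded:
  fixes f :: "'a::topological_space \<Rightarrow> real"
  assumes f: "continuous_on UNIV f" "compact (closure {x. f x \<noteq> 0})"
  obtains c where "\<And>x. \<bar>f x\<bar> \<le> c"
proof -
  have "compact (f ` closure {x. f x \<noteq> 0})"
    using f by (intro compact_continuous_image continuous_on_subset[OF f(1)]) auto
  then have "bounded (f ` closure {x. f x \<noteq> 0})"
    by (rule compact_imp_bounded)
  then obtain c where c: "\<And>y. y \<in> f ` closure {x. f x \<noteq> 0} \<Longrightarrow> \<bar>y\<bar> \<le> c"
    unfolding bounded_real by blast
  have "\<bar>f x\<bar> \<le> max c 0" for x
  proof (cases "f x = 0")
    case False
    then have "x \<in> closure {x. f x \<noteq> 0}"
      by (intro subsetD[OF closure_subset]) simp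
    then show ?thesis
      using c[of "f x"] by simp
  qed simp
  then show ?thesis
    using that by blast
qed

lemma Urysohn_compact_support:
  fixes K U :: "'a::topological_space set"
  assumes H: "Hausdorff_space (euclidean :: 'a topology)"
    and lc: "locally_compact_space (euclidean :: 'a topology)"
    and K: "compact K" and U: "open U" "K \<subseteq> U"
  obtains h :: "'a \<Rightarrow> real" where "continuous_on UNIV h" "compact (closure {x. h x \<noteq> 0})"
    "\<And>x. 0 \<le> h x" "\<And>x. h x \<le> 1" "\<And>x. x \<in> K \<Longrightarrow> h x = 1" "\<And>x. x \<notin> U \<Longrightarrow> h x = 0"
proof -
  have "\<exists>V L. openin euclidean V \<and> compactin euclidean L \<and> closedin euclidean L \<and> K \<subseteq> V \<and> V \<subseteq> L"
    using lc K unfolding locally_compact_space_compact_closed_compact[OF disjI1[OF H]] by simp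
  then obtain V L where VL: "openin euclidean V" "compact L" "closedin euclidean L" "K \<subseteq> V" "V \<subseteq> L"
    by auto
  have "open V" "closed L"
    using VL(1,3) by simp_all
  have "completely_regular_space (euclidean :: 'a topology)"
    using lc H by (intro locally_compact_regular_imp_completely_regular_space) auto
  moreover have "closedin euclidean (- (U \<inter> V))"
    using U(1) \<open>open V\<close> by auto
  ultimately obtain h where h: "continuous_map euclidean (top_of_set {0..1::real}) h"
    "h ` (- (U \<inter> V)) \<subseteq> {0}" "h ` K \<subseteq> {1}"
    using Urysohn_completely_regular_compact_closed[of 0 1 euclidean K "- (U \<inter> V)"] K U(2) VL(4)
    by (auto simp: disjnt_def)
  have "{x. h x \<noteq> 0} \<subseteq> L"
    using h(2) VL(5) by auto
  then have "closure {x. h x \<noteq> 0} \<subseteq> L"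
    using \<open>closed L\<close> by (rule closure_minimal)
  then have "compact (closure {x. h x \<noteq> 0})"
    using compact_Int_closed[OF VL(2), of "closure {x. h x \<noteq> 0}"] by (simp add: Int_absorb1)
  moreover have "continuous_map euclidean euclideanreal h"
    using h(1) continuous_map_in_subtopology by blast
  then have "continuous_on UNIV h"
    using continuous_map_iff_continuous[of UNIV h] by simp
  moreover have "h x \<in> {0..1}" for x
    using continuous_map_image_subset_topspace[OF h(1)] by (auto simp: image_subset_iff)
  moreover have "h x = 1" if "x \<in> K" for x
    using h(3) that by (simp add: image_subset_iff)
  moreover have "h x = 0" if "x \<notin> U" for x
    using h(2) that by (simp add: image_subset_iff)
  ultimately show ?thesis
    using that[of h] by auto
qed

lemma Urysohn_compact_support_separating:
  fixes K1 K2 U :: "'a::topological_space set"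
  assumes H: "Hausdorff_space (euclidean :: 'a topology)"
    and lc: "locally_compact_space (euclidean :: 'a topology)"
    and K: "compact K1" "compact K2" "K1 \<inter> K2 = {}"
    and U: "open U" "K1 \<subseteq> U" "K2 \<subseteq> U"
  obtains g :: "'a \<Rightarrow> real" where "continuous_on UNIV g" "compact (closure {x. g x \<noteq> 0})"
    "\<And>x. \<bar>g x\<bar> \<le> 1" "\<And>x. x \<in> K1 \<Longrightarrow> g x = 1" "\<And>x. x \<in> K2 \<Longrightarrow> g x = -1"
    "\<And>x. x \<notin> U \<Longrightarrow> g x = 0"
proof -
  have "closed K1" "closed K2"
    using K(1,2) Hausdorff_compact_imp_closed[OF H] by blast+
  then have "open (U - K2)" "K1 \<subseteq> U - K2" "open (U - K1)" "K2 \<subseteq> U - K1"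
    using U K(3) by auto
  obtain h1 :: "'a \<Rightarrow> real" where
    h1: "continuous_on UNIV h1" "compact (closure {x. h1 x \<noteq> 0})" "\<And>x. 0 \<le> h1 x"
    "\<And>x. h1 x \<le> 1" "\<And>x. x \<in> K1 \<Longrightarrow> h1 x = 1" "\<And>x. x \<notin> U - K2 \<Longrightarrow> h1 x = 0"
    by (rule Urysohn_compact_support[OF H lc K(1) \<open>open (U - K2)\<close> \<open>K1 \<subseteq> U - K2\<close>]) blast
  obtain h2 :: "'a \<Rightarrow> real" where
    h2: "continuous_on UNIV h2" "compact (closure {x. h2 x \<noteq> 0})" "\<And>x. 0 \<le> h2 x"
    "\<And>x. h2 x \<le> 1" "\<And>x. x \<in> K2 \<Longrightarrow> h2 x = 1" "\<And>x. x \<notin> U - K1 \<Longrightarrow> h2 x = 0"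
    by (rule Urysohn_compact_support[OF H lc K(2) \<open>open (U - K1)\<close> \<open>K2 \<subseteq> U - K1\<close>]) blast
  have "compact (closure ({x. h1 x \<noteq> 0} \<union> {x. h2 x \<noteq> 0}))"
    unfolding closure_Un using h1(2) h2(2) by (rule compact_Un)
  moreover have "{x. h1 x - h2 x \<noteq> 0} \<subseteq> {x. h1 x \<noteq> 0} \<union> {x. h2 x \<noteq> 0}"
    by auto
  ultimately have support: "compact (closure {x. h1 x - h2 x \<noteq> 0})"
    by (rule compact_closure_subset)
  have "continuous_on UNIV (\<lambda>x. h1 x - h2 x)"
    using h1(1) h2(1) by (rule continuous_on_diff)
  moreover note support
  moreover have "\<bar>h1 x - h2 x\<bar> \<le> 1" for x
    using h1(3,4)[of x] h2(3,4)[of x] by linarith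
  moreover have "h1 x - h2 x = 1" if "x \<in> K1" for x
    using that h1(5) h2(6) by simp
  moreover have "h1 x - h2 x = -1" if "x \<in> K2" for x
    using that h1(6) h2(5) by simp
  moreover have "h1 x - h2 x = 0" if "x \<notin> U" for x
    using that h1(6) h2(6) by simp
  ultimately show ?thesis
    by (rule that)
qed

lemma signed_radon_measure_inner_approx:
  assumes H: "Hausdorff_space (euclidean :: 'a::topological_space topology)"
    and \<mu>: "signed_radon_measure (\<mu> :: 'a set \<Rightarrow> real)" and A: "A \<in> sets borel" and e: "0 < e"
  obtains C where "compact C" "C \<subseteq> A" "variation \<mu> (A - C) < e"
proof -
  have "variation \<mu> A - e < Sup {variation \<mu> K | K. compact K \<and> K \<subseteq> A}"
    using \<mu> A e by (simp add: signed_radon_measure_def)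
  from less_cSupD[OF _ this] obtain C where C: "compact C" "C \<subseteq> A" "variation \<mu> A - e < variation \<mu> C"
    by auto
  moreover have "variation \<mu> (A - C) = variation \<mu> A - variation \<mu> C"
    using \<mu> A C(2) Hausdorff_compact_imp_borel[OF H C(1)]
    by (intro variation_Diff) (auto simp: signed_radon_measure_def)
  ultimately show ?thesis
    using that by auto
qed

lemma signed_radon_measure_outer_approx:
  assumes H: "Hausdorff_space (euclidean :: 'a::topological_space topology)"
    and \<mu>: "signed_radon_measure (\<mu> :: 'a set \<Rightarrow> real)" and K: "compact K" and e: "0 < e"
  obtains U where "open U" "K \<subseteq> U" "variation \<mu> (U - K) < e"
proof -
  have "- K \<in> sets borel"
    using Hausdorff_compact_imp_borel[OF H K] by auto
  then obtain C where "compact C" "C \<subseteq> - K" "variation \<mu> (- K - C) < e"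
    using signed_radon_measure_inner_approx[OF H \<mu> _ e] by blast
  moreover have "- C - K = - K - C"
    by auto
  moreover have "open (- C)"
    using Hausdorff_compact_imp_closed[OF H \<open>compact C\<close>] by (simp add: open_Compl)
  ultimately show ?thesis
    using that[of "- C"] by auto
qed

lemma limsup_variation_compact_le:
  fixes \<mu>s :: "nat \<Rightarrow> 'a::topological_space set \<Rightarrow> real"
  assumes H: "Hausdorff_space (euclidean :: 'a topology)"
    and lc: "locally_compact_space (euclidean :: 'a topology)"
    and \<mu>s: "\<And>n. signed_borel_measure (\<mu>s n)" and \<mu>: "signed_radon_measure \<mu>"
    and conv: "\<And>f. continuous_on UNIV f \<Longrightarrow> compact (closure {x. f x \<noteq> 0}) \<Longrightarrow>
      (\<lambda>n. variation_integral (\<mu>s n) f) \<longlonglongrightarrow> variation_integral \<mu> f"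
    and K: "compact K"
  shows "limsup (\<lambda>n. ereal (variation (\<mu>s n) K)) \<le> ereal (variation \<mu> K)"
proof (rule ereal_le_epsilon2)
  fix e :: real
  assume "0 < e"
  have \<mu>': "signed_borel_measure \<mu>"
    using \<mu> by (simp add: signed_radon_measure_def)
  obtain U where U: "open U" "K \<subseteq> U" "variation \<mu> (U - K) < e"
    using signed_radon_measure_outer_approx[OF H \<mu> K \<open>0 < e\<close>] .
  obtain h :: "'a \<Rightarrow> real" where h: "continuous_on UNIV h" "compact (closure {x. h x \<noteq> 0})"
    "\<And>x. 0 \<le> h x" "\<And>x. h x \<le> 1" "\<And>x. x \<in> K \<Longrightarrow> h x = 1" "\<And>x. x \<notin> U \<Longrightarrow> h x = 0"
    using Urysohn_compact_support[OF H lc K U(1,2)] by blast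
  have h_borel: "h \<in> borel_measurable borel"
    using h(1) by (rule borel_measurable_continuous_onI)
  have h_bound: "\<bar>h x\<bar> \<le> 1" for x
    using h(3,4)[of x] by simp
  have K_borel: "K \<in> sets borel" and U_borel: "U \<in> sets borel"
    using Hausdorff_compact_imp_borel[OF H K] U(1) by auto
  have "variation (\<mu>s n) K \<le> variation_integral (\<mu>s n) h" for n
    using variation_integral_ge_indicator[OF \<mu>s h_borel h_bound K_borel, of 1] h(3,5)
    by (simp add: indicator_def)
  moreover have "variation_integral \<mu> h \<le> variation \<mu> U"
    using variation_integral_le_indicator[OF \<mu>' h_borel h_bound U_borel, of 1] h(4,6)
    by (simp add: indicator_def)
  moreover have "variation \<mu> U = variation \<mu> K + variation \<mu> (U - K)"
    using variation_Diff[OF \<mu>' U_borel K_borel U(2)] by simp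
  ultimately have "variation (\<mu>s n) K \<le> variation_integral (\<mu>s n) h"
    and "variation_integral \<mu> h \<le> variation \<mu> K + e" for n
    using U(3) by auto
  then have "limsup (\<lambda>n. ereal (variation (\<mu>s n) K)) \<le> limsup (\<lambda>n. ereal (variation_integral (\<mu>s n) h))"
    by (intro Limsup_mono) simp
  also have "\<dots> = ereal (variation_integral \<mu> h)"
    using conv[OF h(1,2)] by (intro lim_imp_Limsup tendsto_ereal) simp_all
  also have "\<dots> \<le> ereal (variation \<mu> K) + ereal e"
    using \<open>variation_integral \<mu> h \<le> variation \<mu> K + e\<close> by simp
  finally show "limsup (\<lambda>n. ereal (variation (\<mu>s n) K)) \<le> ereal (variation \<mu> K) + ereal e" .
qed

lemma signed_borel_measure_pos_neg_approx:
  assumes \<mu>: "signed_borel_measure \<mu>" and A: "A \<in> sets borel" and e: "0 < e"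
  obtains P N where "P \<in> sets borel" "N \<in> sets borel" "P \<subseteq> A" "N \<subseteq> A" "P \<inter> N = {}"
    "pos_part \<mu> (A - P) + neg_part \<mu> (A - N) < e"
proof -
  have "0 < e / 2"
    using e by simp
  then obtain P where P: "P \<in> sets borel" "P \<subseteq> A" "pos_part \<mu> A - e / 2 < \<mu> P"
    by (rule pos_part_approx)
  from \<open>0 < e / 2\<close> obtain B where B: "B \<in> sets borel" "B \<subseteq> A" "neg_part \<mu> A - e / 2 < - \<mu> B"
    by (rule pos_part_approx[where \<mu>="\<lambda>B. - \<mu> B", folded neg_part_def])
  have "pos_part \<mu> (A - P) + neg_part \<mu> P < e / 2"
    using P jordan_decomposition[OF \<mu> P(1)] pos_part_Diff[OF \<mu> A P(1,2)] by simp
  moreover have "neg_part \<mu> (A - B) + pos_part \<mu> B < e / 2"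
    using B jordan_decomposition[OF \<mu> B(1)] neg_part_Diff[OF \<mu> A B(1,2)] by simp
  moreover have "neg_part \<mu> (A - (B - P)) \<le> neg_part \<mu> ((A - B) \<union> P)"
    by (rule neg_part_mono[OF \<mu>]) auto
  moreover have "neg_part \<mu> ((A - B) \<union> P) \<le> neg_part \<mu> (A - B) + neg_part \<mu> P"
    using A B(1) P(1) by (intro neg_part_subadditive[OF \<mu>]) auto
  ultimately have "pos_part \<mu> (A - P) + neg_part \<mu> (A - (B - P)) < e"
    using pos_part_nonneg[OF \<mu>, of B] by linarith
  then show ?thesis
    by (rule that[of P "B - P", rotated -1]) (use P B in auto)
qed

lemma signed_radon_measure_compact_pos_neg_approx:
  assumes H: "Hausdorff_space (euclidean :: 'a::topological_space topology)"
    and \<mu>: "signed_radon_measure (\<mu> :: 'a set \<Rightarrow> real)" and A: "A \<in> sets borel" and e: "0 < e"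
  obtains K1 K2 where "compact K1" "compact K2" "K1 \<subseteq> A" "K2 \<subseteq> A" "K1 \<inter> K2 = {}"
    "pos_part \<mu> (A - K1) + neg_part \<mu> (A - K2) < e"
proof -
  have \<mu>': "signed_borel_measure \<mu>"
    using \<mu> by (simp add: signed_radon_measure_def)
  have "0 < e / 2" "0 < e / 4"
    using e by simp_all
  obtain P N where PN: "P \<in> sets borel" "N \<in> sets borel" "P \<subseteq> A" "N \<subseteq> A" "P \<inter> N = {}"
    "pos_part \<mu> (A - P) + neg_part \<mu> (A - N) < e / 2"
    using signed_borel_measure_pos_neg_approx[OF \<mu>' A \<open>0 < e / 2\<close>] by blast
  obtain K1 where K1: "compact K1" "K1 \<subseteq> P" "variation \<mu> (P - K1) < e / 4"
    using signed_radon_measure_inner_approx[OF H \<mu> PN(1) \<open>0 < e / 4\<close>] by blast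
  obtain K2 where K2: "compact K2" "K2 \<subseteq> N" "variation \<mu> (N - K2) < e / 4"
    using signed_radon_measure_inner_approx[OF H \<mu> PN(2) \<open>0 < e / 4\<close>] by blast
  have borel: "A - P \<in> sets borel" "P - K1 \<in> sets borel" "A - N \<in> sets borel" "N - K2 \<in> sets borel"
    using A PN(1,2) Hausdorff_compact_imp_borel[OF H] K1(1) K2(1) by auto
  have "pos_part \<mu> (A - K1) \<le> pos_part \<mu> ((A - P) \<union> (P - K1))"
    by (rule pos_part_mono[OF \<mu>']) auto
  also have "\<dots> \<le> pos_part \<mu> (A - P) + variation \<mu> (P - K1)"
    using pos_part_subadditive[OF \<mu>' borel(1,2)] pos_part_le_variation[OF \<mu>', of "P - K1"] by linarith
  finally have "pos_part \<mu> (A - K1) \<le> pos_part \<mu> (A - P) + variation \<mu> (P - K1)" .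
  moreover have "neg_part \<mu> (A - K2) \<le> neg_part \<mu> ((A - N) \<union> (N - K2))"
    by (rule neg_part_mono[OF \<mu>']) auto
  moreover have "\<dots> \<le> neg_part \<mu> (A - N) + variation \<mu> (N - K2)"
    using neg_part_subadditive[OF \<mu>' borel(3,4)] neg_part_le_variation[OF \<mu>', of "N - K2"] by linarith
  ultimately have "pos_part \<mu> (A - K1) + neg_part \<mu> (A - K2) < e"
    using PN(6) K1(3) K2(3) by linarith
  moreover have "K1 \<subseteq> A" "K2 \<subseteq> A" "K1 \<inter> K2 = {}"
    using K1(2) K2(2) PN(3,4,5) by auto
  ultimately show ?thesis
    using K1(1) K2(1) by (intro that) simp_all
qed

lemma signed_integral_le_variation:
  fixes g :: "'a::topological_space \<Rightarrow> real"
  assumes \<nu>: "signed_borel_measure \<nu>" and g: "g \<in> borel_measurable borel" "\<And>x. \<bar>g x\<bar> \<le> 1"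
    and U: "U \<in> sets borel" "\<And>x. x \<notin> U \<Longrightarrow> g x = 0"
  shows "signed_integral \<nu> g \<le> variation \<nu> U"
proof -
  have "integral\<^sup>L (pos_measure \<nu>) g \<le> 1 * pos_part \<nu> U + 0 * pos_part \<nu> {}"
    using g U by (intro integral_pos_measure_le[OF \<nu> g]) (auto simp: indicator_def abs_le_iff)
  moreover have "- 1 * neg_part \<nu> U + 0 * neg_part \<nu> {} \<le> integral\<^sup>L (neg_measure \<nu>) g"
    using g U by (intro integral_neg_measure_ge[OF \<nu> g]) (auto simp: indicator_def abs_le_iff)
  ultimately show ?thesis
    by (simp add: signed_integral_def variation_def)
qed

lemma signed_integral_approx_variation_open:
  fixes U :: "'a::topological_space set"
  assumes H: "Hausdorff_space (euclidean :: 'a topology)"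
    and lc: "locally_compact_space (euclidean :: 'a topology)"
    and \<mu>: "signed_radon_measure \<mu>" and U: "open U" and e: "0 < e"
  obtains g :: "'a \<Rightarrow> real" where "continuous_on UNIV g" "compact (closure {x. g x \<noteq> 0})"
    "\<And>x. \<bar>g x\<bar> \<le> 1" "\<And>x. x \<notin> U \<Longrightarrow> g x = 0" "variation \<mu> U - e < signed_integral \<mu> g"
proof -
  have \<mu>': "signed_borel_measure \<mu>"
    using \<mu> by (simp add: signed_radon_measure_def)
  have U_borel: "U \<in> sets borel"
    using U by simp
  have "0 < e / 2"
    using e by simp
  then obtain K1 K2 where K: "compact K1" "compact K2" "K1 \<subseteq> U" "K2 \<subseteq> U" "K1 \<inter> K2 = {}"
    "pos_part \<mu> (U - K1) + neg_part \<mu> (U - K2) < e / 2"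
    using signed_radon_measure_compact_pos_neg_approx[OF H \<mu> U_borel] by blast
  obtain g :: "'a \<Rightarrow> real" where g: "continuous_on UNIV g" "compact (closure {x. g x \<noteq> 0})"
    "\<And>x. \<bar>g x\<bar> \<le> 1" "\<And>x. x \<in> K1 \<Longrightarrow> g x = 1" "\<And>x. x \<in> K2 \<Longrightarrow> g x = -1"
    "\<And>x. x \<notin> U \<Longrightarrow> g x = 0"
    using Urysohn_compact_support_separating[OF H lc K(1,2,5) U K(3,4)] by blast
  have g_borel: "g \<in> borel_measurable borel"
    using g(1) by (rule borel_measurable_continuous_onI)
  have borel: "K1 \<in> sets borel" "K2 \<in> sets borel" "U - K1 \<in> sets borel" "U - K2 \<in> sets borel"
    using K(1,2) Hausdorff_compact_imp_borel[OF H] U_borel by auto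
  have "1 * pos_part \<mu> K1 + - 1 * pos_part \<mu> (U - K1) \<le> integral\<^sup>L (pos_measure \<mu>) g"
  proof (rule integral_pos_measure_ge[OF \<mu>' g_borel g(3) borel(1,3)])
    show "1 * indicator K1 x + - 1 * indicator (U - K1) x \<le> g x" for x
      using g(3)[of x] g(4)[of x] g(6)[of x] K(3) by (auto simp: indicator_def abs_le_iff)
  qed
  moreover have "integral\<^sup>L (neg_measure \<mu>) g \<le> 1 * neg_part \<mu> (U - K2) + - 1 * neg_part \<mu> K2"
  proof (rule integral_neg_measure_le[OF \<mu>' g_borel g(3) borel(4,2)])
    show "g x \<le> 1 * indicator (U - K2) x + - 1 * indicator K2 x" for x
      using g(3)[of x] g(5)[of x] g(6)[of x] K(4) by (auto simp: indicator_def abs_le_iff)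
  qed
  moreover have "pos_part \<mu> K1 = pos_part \<mu> U - pos_part \<mu> (U - K1)"
    using pos_part_Diff[OF \<mu>' U_borel borel(1) K(3)] by simp
  moreover have "neg_part \<mu> K2 = neg_part \<mu> U - neg_part \<mu> (U - K2)"
    using neg_part_Diff[OF \<mu>' U_borel borel(2) K(4)] by simp
  ultimately have "variation \<mu> U - e < signed_integral \<mu> g"
    using K(6) by (simp add: signed_integral_def variation_def)
  with g(1,2,3,6) show ?thesis
    by (rule that)
qed

lemma eventually_variation_open_gt:
  fixes \<mu>s :: "nat \<Rightarrow> 'a::topological_space set \<Rightarrow> real"
  assumes H: "Hausdorff_space (euclidean :: 'a topology)"
    and lc: "locally_compact_space (euclidean :: 'a topology)"
    and \<mu>s: "\<And>n. signed_borel_measure (\<mu>s n)" and \<mu>: "signed_radon_measure \<mu>"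
    and conv: "vague_conv \<mu>s \<mu>" and U: "open U" and e: "0 < e"
  shows "eventually (\<lambda>n. variation \<mu> U - e < variation (\<mu>s n) U) sequentially"
proof -
  obtain g :: "'a \<Rightarrow> real" where g: "continuous_on UNIV g" "compact (closure {x. g x \<noteq> 0})"
    "\<And>x. \<bar>g x\<bar> \<le> 1" "\<And>x. x \<notin> U \<Longrightarrow> g x = 0" "variation \<mu> U - e < signed_integral \<mu> g"
    using signed_integral_approx_variation_open[OF H lc \<mu> U e] by blast
  have "(\<lambda>n. signed_integral (\<mu>s n) g) \<longlonglongrightarrow> signed_integral \<mu> g"
    using conv g(1,2) by (simp add: vague_conv_def)
  then have "eventually (\<lambda>n. variation \<mu> U - e < signed_integral (\<mu>s n) g) sequentially"
    using g(5) by (rule order_tendstoD)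
  moreover have "signed_integral (\<mu>s n) g \<le> variation (\<mu>s n) U" for n
    using U g by (intro signed_integral_le_variation[OF \<mu>s] borel_measurable_continuous_onI) auto
  ultimately show ?thesis
    by (blast intro: eventually_mono order.strict_trans2)
qed

definition layer :: "real \<Rightarrow> nat \<Rightarrow> real \<Rightarrow> real" where
  "layer \<epsilon> k t = min \<epsilon> (max 0 (t - real k * \<epsilon>))"

lemma sum_layer:
  assumes "0 < \<epsilon>" "0 \<le> t" "t \<le> real m * \<epsilon>"
  shows "(\<Sum>k<m. layer \<epsilon> k t) = t"
proof -
  have "(\<Sum>k<m. layer \<epsilon> k t) = min t (real m * \<epsilon>)" for m
  proof (induction m)
    case (Suc m)
    then show ?case
      using assms(1,2) by (auto simp: layer_def min_def max_def algebra_simps)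
  qed (use assms(2) in simp)
  then show ?thesis
    using assms(3) by simp
qed

lemma layer_le_indicator:
  "0 \<le> \<epsilon> \<Longrightarrow> {x. real k * \<epsilon> < f x} \<subseteq> S \<Longrightarrow> layer \<epsilon> k (f x) \<le> \<epsilon> * indicator S x"
  by (cases "real k * \<epsilon> < f x") (auto simp: layer_def indicator_def)

lemma layer_ge_indicator:
  "0 \<le> \<epsilon> \<Longrightarrow> S \<subseteq> {x. real (Suc k) * \<epsilon> \<le> f x} \<Longrightarrow> \<epsilon> * indicator S x \<le> layer \<epsilon> k (f x)"
  by (auto simp: layer_def indicator_def algebra_simps)

lemma borel_measurable_layer:
  "f \<in> borel_measurable M \<Longrightarrow> (\<lambda>x. layer \<epsilon> k (f x)) \<in> borel_measurable M"
  unfolding layer_def by (intro borel_measurable_min borel_measurable_max borel_measurable_diff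
      borel_measurable_const)

lemma abs_layer_le: "0 \<le> \<epsilon> \<Longrightarrow> \<bar>layer \<epsilon> k t\<bar> \<le> \<epsilon>"
  by (simp add: layer_def)

lemma variation_integral_eq_sum_layers:
  fixes f :: "'a::topological_space \<Rightarrow> real"
  assumes \<nu>: "signed_borel_measure \<nu>" and f: "f \<in> borel_measurable borel" "\<And>x. 0 \<le> f x"
    and m: "\<And>x. f x \<le> real m * \<epsilon>" and \<epsilon>: "0 < \<epsilon>"
  shows "variation_integral \<nu> f = (\<Sum>k<m. variation_integral \<nu> (\<lambda>x. layer \<epsilon> k (f x)))"
proof -
  have "(\<lambda>x. \<Sum>k<m. layer \<epsilon> k (f x)) = f"
    using sum_layer[OF \<epsilon> f(2) m] by (rule ext)
  then have "variation_integral \<nu> f = variation_integral \<nu> (\<lambda>x. \<Sum>k<m. layer \<epsilon> k (f x))"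
    by simp
  also have "\<dots> = (\<Sum>k<m. variation_integral \<nu> (\<lambda>x. layer \<epsilon> k (f x)))"
    using \<epsilon> by (intro variation_integral_sum[OF \<nu> borel_measurable_layer[OF f(1)] abs_layer_le]) simp
  finally show ?thesis .
qed

lemma variation_integral_le_layers:
  fixes f :: "'a::topological_space \<Rightarrow> real"
  assumes \<nu>: "signed_borel_measure \<nu>" and f: "f \<in> borel_measurable borel" "\<And>x. 0 \<le> f x"
    and m: "\<And>x. f x \<le> real m * \<epsilon>" and \<epsilon>: "0 < \<epsilon>"
    and S: "\<And>k. S k \<in> sets borel" "\<And>k. {x. real k * \<epsilon> < f x} \<subseteq> S k"
  shows "variation_integral \<nu> f \<le> \<epsilon> * (\<Sum>k<m. variation \<nu> (S k))"
proof -
  have "variation_integral \<nu> (\<lambda>x. layer \<epsilon> k (f x)) \<le> \<epsilon> * variation \<nu> (S k)" for k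
  proof (rule variation_integral_le_indicator[OF \<nu> borel_measurable_layer[OF f(1)] _ S(1)])
    show "\<bar>layer \<epsilon> k (f x)\<bar> \<le> \<epsilon>" "layer \<epsilon> k (f x) \<le> \<epsilon> * indicator (S k) x" for x
      using \<epsilon> S(2) by (simp_all add: abs_layer_le layer_le_indicator)
  qed
  then show ?thesis
    unfolding variation_integral_eq_sum_layers[OF \<nu> f m \<epsilon>] sum_distrib_left by (rule sum_mono)
qed

lemma variation_integral_ge_layers:
  fixes f :: "'a::topological_space \<Rightarrow> real"
  assumes \<nu>: "signed_borel_measure \<nu>" and f: "f \<in> borel_measurable borel" "\<And>x. 0 \<le> f x"
    and m: "\<And>x. f x \<le> real m * \<epsilon>" and \<epsilon>: "0 < \<epsilon>"
    and S: "\<And>k. S k \<in> sets borel" "\<And>k. S k \<subseteq> {x. real (Suc k) * \<epsilon> \<le> f x}"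
  shows "\<epsilon> * (\<Sum>k<m. variation \<nu> (S k)) \<le> variation_integral \<nu> f"
proof -
  have "\<epsilon> * variation \<nu> (S k) \<le> variation_integral \<nu> (\<lambda>x. layer \<epsilon> k (f x))" for k
  proof (rule variation_integral_ge_indicator[OF \<nu> borel_measurable_layer[OF f(1)] _ S(1)])
    show "\<bar>layer \<epsilon> k (f x)\<bar> \<le> \<epsilon>" "\<epsilon> * indicator (S k) x \<le> layer \<epsilon> k (f x)" for x
      using \<epsilon> S(2) by (simp_all add: abs_layer_le layer_ge_indicator)
  qed
  then show ?thesis
    unfolding variation_integral_eq_sum_layers[OF \<nu> f m \<epsilon>] sum_distrib_left by (rule sum_mono)
qed

lemma sum_lessThan_le_shift:
  fixes a :: "nat \<Rightarrow> 'a::ordered_comm_monoid_add"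
  assumes "\<And>k. 0 \<le> a k"
  shows "(\<Sum>k<m. a k) \<le> a 0 + (\<Sum>k<m. a (Suc k))"
proof -
  have "(\<Sum>k<m. a k) \<le> (\<Sum>k<Suc m. a k)"
    using assms by (simp add: add_increasing2)
  then show ?thesis
    by (simp only: sum.lessThan_Suc_shift)
qed

lemma eventually_variation_integral_le:
  fixes \<mu>s :: "nat \<Rightarrow> 'a::topological_space set \<Rightarrow> real" and f :: "'a \<Rightarrow> real"
  assumes \<mu>s: "\<And>n. signed_borel_measure (\<mu>s n)" and \<mu>: "signed_borel_measure \<mu>"
    and f: "continuous_on UNIV f" "compact (closure {x. f x \<noteq> 0})" "\<And>x. 0 \<le> f x"
    and m: "\<And>x. f x \<le> real m * \<epsilon>" and \<epsilon>: "0 < \<epsilon>"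
    and upper: "\<And>K d. compact K \<Longrightarrow> 0 < d \<Longrightarrow>
      eventually (\<lambda>n. variation (\<mu>s n) K < variation \<mu> K + d) sequentially"
  shows "eventually (\<lambda>n. variation_integral (\<mu>s n) f \<le>
    variation_integral \<mu> f + \<epsilon> * (variation \<mu> UNIV + 1)) sequentially"
proof -
  define F where "F k = closure {x. f x \<noteq> 0} \<inter> {x. real k * \<epsilon> \<le> f x}" for k
  have F_closed: "closed (F k)" for k
    unfolding F_def using f(1) by (intro closed_Int closed_Collect_le continuous_intros) auto
  then have F_borel: "F k \<in> sets borel" for k
    by simp
  have F_compact: "compact (F k)" for k
    unfolding F_def using f(1,2) by (intro compact_Int_closed closed_Collect_le continuous_intros) auto
  have F_lower: "{x. real k * \<epsilon> < f x} \<subseteq> F k" for k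
  proof
    fix x assume "x \<in> {x. real k * \<epsilon> < f x}"
    moreover have "0 \<le> real k * \<epsilon>"
      using \<epsilon> by simp
    ultimately show "x \<in> F k"
      unfolding F_def using closure_subset[of "{x. f x \<noteq> 0}"] by auto
  qed
  have f_borel: "f \<in> borel_measurable borel"
    using f(1) by (rule borel_measurable_continuous_onI)
  define \<delta> where "\<delta> = 1 / (real m + 1)"
  have \<delta>: "0 < \<delta>" "real m * \<delta> \<le> 1"
    by (auto simp: \<delta>_def field_simps)
  have "eventually (\<lambda>n. \<forall>k\<in>{..<m}. variation (\<mu>s n) (F k) < variation \<mu> (F k) + \<delta>) sequentially"
    using \<delta>(1) by (intro eventually_ball_finite ballI upper F_compact) auto
  then show ?thesis
  proof eventually_elim
    case (elim n)
    have "variation (\<mu>s n) (F k) \<le> variation \<mu> (F k) + \<delta>" if "k \<in> {..<m}" for k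
      using elim that by (simp add: less_imp_le)
    then have "(\<Sum>k<m. variation (\<mu>s n) (F k)) \<le> (\<Sum>k<m. variation \<mu> (F k) + \<delta>)"
      by (rule sum_mono)
    moreover have "(\<Sum>k<m. variation \<mu> (F k) + \<delta>) = (\<Sum>k<m. variation \<mu> (F k)) + real m * \<delta>"
      by (simp add: sum.distrib)
    moreover have "(\<Sum>k<m. variation \<mu> (F k)) \<le> variation \<mu> UNIV + (\<Sum>k<m. variation \<mu> (F (Suc k)))"
      using sum_lessThan_le_shift[of "\<lambda>k. variation \<mu> (F k)" m] variation_nonneg[OF \<mu>]
        variation_mono[OF \<mu>, of "F 0" UNIV] by fastforce
    ultimately have "(\<Sum>k<m. variation (\<mu>s n) (F k)) \<le>
        (variation \<mu> UNIV + 1) + (\<Sum>k<m. variation \<mu> (F (Suc k)))"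
      using \<delta>(2) by linarith
    from mult_left_mono[OF this less_imp_le[OF \<epsilon>]]
    have "\<epsilon> * (\<Sum>k<m. variation (\<mu>s n) (F k)) \<le>
        \<epsilon> * (variation \<mu> UNIV + 1) + \<epsilon> * (\<Sum>k<m. variation \<mu> (F (Suc k)))"
      by (simp add: distrib_left)
    moreover have "variation_integral (\<mu>s n) f \<le> \<epsilon> * (\<Sum>k<m. variation (\<mu>s n) (F k))"
      by (rule variation_integral_le_layers[OF \<mu>s f_borel f(3) m \<epsilon> F_borel F_lower])
    moreover have "\<epsilon> * (\<Sum>k<m. variation \<mu> (F (Suc k))) \<le> variation_integral \<mu> f"
      by (rule variation_integral_ge_layers[OF \<mu> f_borel f(3) m \<epsilon> F_borel]) (auto simp: F_def)
    ultimately show ?case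
      by linarith
  qed
qed

lemma eventually_variation_integral_ge:
  fixes \<mu>s :: "nat \<Rightarrow> 'a::topological_space set \<Rightarrow> real" and f :: "'a \<Rightarrow> real"
  assumes \<mu>s: "\<And>n. signed_borel_measure (\<mu>s n)" and \<mu>: "signed_borel_measure \<mu>"
    and f: "continuous_on UNIV f" "\<And>x. 0 \<le> f x"
    and m: "\<And>x. f x \<le> real m * \<epsilon>" and \<epsilon>: "0 < \<epsilon>"
    and lower: "\<And>V d. open V \<Longrightarrow> 0 < d \<Longrightarrow>
      eventually (\<lambda>n. variation \<mu> V - d < variation (\<mu>s n) V) sequentially"
  shows "eventually (\<lambda>n. variation_integral \<mu> f - \<epsilon> * (variation \<mu> UNIV + 1) \<le>
    variation_integral (\<mu>s n) f) sequentially"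
proof -
  define U where "U k = {x. real k * \<epsilon> < f x}" for k
  have U_open: "open (U k)" for k
    unfolding U_def using f(1) by (intro open_Collect_less continuous_intros) auto
  then have U_borel: "U k \<in> sets borel" for k
    by simp
  have f_borel: "f \<in> borel_measurable borel"
    using f(1) by (rule borel_measurable_continuous_onI)
  define \<delta> where "\<delta> = 1 / (real m + 1)"
  have \<delta>: "0 < \<delta>" "real m * \<delta> \<le> 1"
    by (auto simp: \<delta>_def field_simps)
  have "eventually (\<lambda>n. \<forall>k\<in>{..<m}. variation \<mu> (U (Suc k)) - \<delta> < variation (\<mu>s n) (U (Suc k)))
    sequentially"
    using \<delta>(1) by (intro eventually_ball_finite ballI lower U_open) auto
  then show ?thesis
  proof eventually_elim
    case (elim n)
    have "(\<Sum>k<m. variation \<mu> (U k)) \<le> variation \<mu> UNIV + (\<Sum>k<m. variation \<mu> (U (Suc k)))"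
      using sum_lessThan_le_shift[of "\<lambda>k. variation \<mu> (U k)" m] variation_nonneg[OF \<mu>]
        variation_mono[OF \<mu>, of "U 0" UNIV] by fastforce
    moreover have "(\<Sum>k<m. variation \<mu> (U (Suc k))) \<le> (\<Sum>k<m. variation (\<mu>s n) (U (Suc k)) + \<delta>)"
    proof (rule sum_mono)
      fix k assume "k \<in> {..<m}"
      with elim have "variation \<mu> (U (Suc k)) - \<delta> < variation (\<mu>s n) (U (Suc k))"
        by blast
      then show "variation \<mu> (U (Suc k)) \<le> variation (\<mu>s n) (U (Suc k)) + \<delta>"
        by linarith
    qed
    moreover have "(\<Sum>k<m. variation (\<mu>s n) (U (Suc k)) + \<delta>) =
        (\<Sum>k<m. variation (\<mu>s n) (U (Suc k))) + real m * \<delta>"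
      by (simp add: sum.distrib)
    ultimately have "(\<Sum>k<m. variation \<mu> (U k)) \<le>
        (variation \<mu> UNIV + 1) + (\<Sum>k<m. variation (\<mu>s n) (U (Suc k)))"
      using \<delta>(2) by linarith
    from mult_left_mono[OF this less_imp_le[OF \<epsilon>]]
    have "\<epsilon> * (\<Sum>k<m. variation \<mu> (U k)) \<le>
        \<epsilon> * (variation \<mu> UNIV + 1) + \<epsilon> * (\<Sum>k<m. variation (\<mu>s n) (U (Suc k)))"
      by (simp add: distrib_left)
    moreover have "variation_integral \<mu> f \<le> \<epsilon> * (\<Sum>k<m. variation \<mu> (U k))"
      by (rule variation_integral_le_layers[OF \<mu> f_borel f(2) m \<epsilon> U_borel]) (simp add: U_def)
    moreover have "\<epsilon> * (\<Sum>k<m. variation (\<mu>s n) (U (Suc k))) \<le> variation_integral (\<mu>s n) f"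
      by (rule variation_integral_ge_layers[OF \<mu>s f_borel f(2) m \<epsilon> U_borel]) (auto simp: U_def)
    ultimately show ?case
      by linarith
  qed
qed

lemma variation_integral_tendsto_nonneg:
  fixes \<mu>s :: "nat \<Rightarrow> 'a::topological_space set \<Rightarrow> real" and f :: "'a \<Rightarrow> real"
  assumes \<mu>s: "\<And>n. signed_borel_measure (\<mu>s n)" and \<mu>: "signed_borel_measure \<mu>"
    and f: "continuous_on UNIV f" "compact (closure {x. f x \<noteq> 0})" "\<And>x. 0 \<le> f x"
    and upper: "\<And>K d. compact K \<Longrightarrow> 0 < d \<Longrightarrow>
      eventually (\<lambda>n. variation (\<mu>s n) K < variation \<mu> K + d) sequentially"
    and lower: "\<And>V d. open V \<Longrightarrow> 0 < d \<Longrightarrow>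
      eventually (\<lambda>n. variation \<mu> V - d < variation (\<mu>s n) V) sequentially"
  shows "(\<lambda>n. variation_integral (\<mu>s n) f) \<longlonglongrightarrow> variation_integral \<mu> f"
proof (rule tendstoI)
  fix \<eta> :: real
  assume "0 < \<eta>"
  define \<epsilon> where "\<epsilon> = \<eta> / (2 * (variation \<mu> UNIV + 1))"
  have "0 \<le> variation \<mu> UNIV"
    by (rule variation_nonneg[OF \<mu>])
  then have "0 < \<epsilon>" "\<epsilon> * (variation \<mu> UNIV + 1) = \<eta> / 2"
    using \<open>0 < \<eta>\<close> by (simp_all add: \<epsilon>_def field_simps)
  then have \<epsilon>: "0 < \<epsilon>" "\<epsilon> * (variation \<mu> UNIV + 1) < \<eta>"
    using \<open>0 < \<eta>\<close> by simp_all
  obtain c where c: "\<And>x. \<bar>f x\<bar> \<le> c"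
    using continuous_compact_support_bounded[OF f(1,2)] by blast
  define m where "m = nat \<lceil>c / \<epsilon>\<rceil>"
  have m: "f x \<le> real m * \<epsilon>" for x
  proof -
    have "c / \<epsilon> \<le> real m"
      unfolding m_def by linarith
    then show ?thesis
      using c[of x] \<epsilon>(1) by (simp add: field_simps)
  qed
  have "eventually (\<lambda>n. variation_integral (\<mu>s n) f \<le>
      variation_integral \<mu> f + \<epsilon> * (variation \<mu> UNIV + 1)) sequentially"
    using upper by (rule eventually_variation_integral_le[OF \<mu>s \<mu> f m \<epsilon>(1)])
  moreover have "eventually (\<lambda>n. variation_integral \<mu> f - \<epsilon> * (variation \<mu> UNIV + 1) \<le>
      variation_integral (\<mu>s n) f) sequentially"
    using lower by (rule eventually_variation_integral_ge[OF \<mu>s \<mu> f(1,3) m \<epsilon>(1)])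
  ultimately show "eventually (\<lambda>n. dist (variation_integral (\<mu>s n) f) (variation_integral \<mu> f) < \<eta>)
      sequentially"
  proof eventually_elim
    case (elim n)
    then show ?case
      using \<epsilon>(2) by (simp add: dist_real_def abs_less_iff)
  qed
qed

lemma variation_integral_tendsto:
  fixes \<mu>s :: "nat \<Rightarrow> 'a::topological_space set \<Rightarrow> real" and f :: "'a \<Rightarrow> real"
  assumes \<mu>s: "\<And>n. signed_borel_measure (\<mu>s n)" and \<mu>: "signed_borel_measure \<mu>"
    and f: "continuous_on UNIV f" "compact (closure {x. f x \<noteq> 0})"
    and upper: "\<And>K d. compact K \<Longrightarrow> 0 < d \<Longrightarrow>
      eventually (\<lambda>n. variation (\<mu>s n) K < variation \<mu> K + d) sequentially"
    and lower: "\<And>V d. open V \<Longrightarrow> 0 < d \<Longrightarrow>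
      eventually (\<lambda>n. variation \<mu> V - d < variation (\<mu>s n) V) sequentially"
  shows "(\<lambda>n. variation_integral (\<mu>s n) f) \<longlonglongrightarrow> variation_integral \<mu> f"
proof -
  define fp where "fp x = max (f x) 0" for x
  define fm where "fm x = max (- f x) 0" for x
  have cont: "continuous_on UNIV fp" "continuous_on UNIV fm"
    unfolding fp_def fm_def by (intro continuous_intros f(1))+
  have "{x. fp x \<noteq> 0} \<subseteq> {x. f x \<noteq> 0}" "{x. fm x \<noteq> 0} \<subseteq> {x. f x \<noteq> 0}"
    by (auto simp: fp_def fm_def)
  then have supp: "compact (closure {x. fp x \<noteq> 0})" "compact (closure {x. fm x \<noteq> 0})"
    using compact_closure_subset[OF f(2)] by blast+
  obtain cp where bound_p: "\<And>x. \<bar>fp x\<bar> \<le> cp"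
    using continuous_compact_support_bounded[OF cont(1) supp(1)] by blast
  obtain cm where bound_m: "\<And>x. \<bar>fm x\<bar> \<le> cm"
    using continuous_compact_support_bounded[OF cont(2) supp(2)] by blast
  have "variation_integral \<nu> f = variation_integral \<nu> fp - variation_integral \<nu> fm"
    if "signed_borel_measure \<nu>" for \<nu>
  proof -
    have "f = (\<lambda>x. fp x - fm x)"
      by (auto simp: fp_def fm_def)
    then show ?thesis
      using variation_integral_diff[OF that _ bound_p _ bound_m] cont
      by (simp add: borel_measurable_continuous_onI)
  qed
  moreover have "(\<lambda>n. variation_integral (\<mu>s n) fp) \<longlonglongrightarrow> variation_integral \<mu> fp"
    by (rule variation_integral_tendsto_nonneg[OF \<mu>s \<mu> cont(1) supp(1) _ upper lower])
       (simp add: fp_def)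
  moreover have "(\<lambda>n. variation_integral (\<mu>s n) fm) \<longlonglongrightarrow> variation_integral \<mu> fm"
    by (rule variation_integral_tendsto_nonneg[OF \<mu>s \<mu> cont(2) supp(2) _ upper lower])
       (simp add: fm_def)
  ultimately show ?thesis
    using \<mu>s \<mu> by (simp add: tendsto_diff)
qed

lemma vague_conv_variation_iff_limsup:
  fixes \<mu>s :: "nat \<Rightarrow> 'a::topological_space set \<Rightarrow> real"
  assumes H: "Hausdorff_space (euclidean :: 'a topology)"
    and lc: "locally_compact_space (euclidean :: 'a topology)"
    and \<mu>s: "\<And>n. signed_borel_measure (\<mu>s n)" and \<mu>: "signed_radon_measure \<mu>"
    and conv: "vague_conv \<mu>s \<mu>"
  shows "(\<forall>f. continuous_on UNIV f \<longrightarrow> compact (closure {x. f x \<noteq> 0}) \<longrightarrow>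
      (\<lambda>n. variation_integral (\<mu>s n) f) \<longlonglongrightarrow> variation_integral \<mu> f) \<longleftrightarrow>
    (\<forall>K. compact K \<longrightarrow> limsup (\<lambda>n. ereal (variation (\<mu>s n) K)) \<le> ereal (variation \<mu> K))"
proof (intro iffI allI impI)
  fix K :: "'a set"
  assume "\<forall>f. continuous_on UNIV f \<longrightarrow> compact (closure {x. f x \<noteq> 0}) \<longrightarrow>
      (\<lambda>n. variation_integral (\<mu>s n) f) \<longlonglongrightarrow> variation_integral \<mu> f" and "compact K"
  then show "limsup (\<lambda>n. ereal (variation (\<mu>s n) K)) \<le> ereal (variation \<mu> K)"
    by (intro limsup_variation_compact_le[OF H lc \<mu>s \<mu>]) blast+
next
  fix f :: "'a \<Rightarrow> real"
  assume limsup: "\<forall>K. compact K \<longrightarrow> limsup (\<lambda>n. ereal (variation (\<mu>s n) K)) \<le> ereal (variation \<mu> K)"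
    and f: "continuous_on UNIV f" "compact (closure {x. f x \<noteq> 0})"
  have upper: "eventually (\<lambda>n. variation (\<mu>s n) K < variation \<mu> K + d) sequentially"
    if "compact K" "0 < d" for K d
  proof -
    have "limsup (\<lambda>n. ereal (variation (\<mu>s n) K)) \<le> ereal (variation \<mu> K)"
      using limsup that(1) by blast
    also have "\<dots> < ereal (variation \<mu> K + d)"
      using that(2) by simp
    finally have "eventually (\<lambda>n. ereal (variation (\<mu>s n) K) < ereal (variation \<mu> K + d)) sequentially"
      by (rule Limsup_lessD)
    then show ?thesis
      by simp
  qed
  have \<mu>': "signed_borel_measure \<mu>"
    using \<mu> by (simp add: signed_radon_measure_def)
  show "(\<lambda>n. variation_integral (\<mu>s n) f) \<longlonglongrightarrow> variation_integral \<mu> f"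
    by (rule variation_integral_tendsto[OF \<mu>s \<mu>' f upper eventually_variation_open_gt[OF H lc \<mu>s \<mu> conv]])
qed

lemma tendsto_add_diff_iff:
  fixes a b :: "nat \<Rightarrow> real"
  shows "(a \<longlonglongrightarrow> x \<and> b \<longlonglongrightarrow> y) \<longleftrightarrow>
    ((\<lambda>n. a n - b n) \<longlonglongrightarrow> x - y \<and> (\<lambda>n. a n + b n) \<longlonglongrightarrow> x + y)"
proof (intro iffI conjI)
  assume "(\<lambda>n. a n - b n) \<longlonglongrightarrow> x - y \<and> (\<lambda>n. a n + b n) \<longlonglongrightarrow> x + y"
  then have diff: "(\<lambda>n. a n - b n) \<longlonglongrightarrow> x - y" and sum: "(\<lambda>n. a n + b n) \<longlonglongrightarrow> x + y"
    by simp_all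
  have "(\<lambda>n. ((a n + b n) + (a n - b n)) / 2) \<longlonglongrightarrow> ((x + y) + (x - y)) / 2"
    by (intro tendsto_divide tendsto_add sum diff tendsto_const) simp
  moreover have "(\<lambda>n. ((a n + b n) - (a n - b n)) / 2) \<longlonglongrightarrow> ((x + y) - (x - y)) / 2"
    by (intro tendsto_divide tendsto_diff sum diff tendsto_const) simp
  moreover have "(\<lambda>n. ((a n + b n) + (a n - b n)) / 2) = a" "(\<lambda>n. ((a n + b n) - (a n - b n)) / 2) = b"
    by auto
  ultimately show "a \<longlonglongrightarrow> x" "b \<longlonglongrightarrow> y"
    by simp_all
next
  assume "a \<longlonglongrightarrow> x \<and> b \<longlonglongrightarrow> y"
  then show "(\<lambda>n. a n - b n) \<longlonglongrightarrow> x - y" "(\<lambda>n. a n + b n) \<longlonglongrightarrow> x + y"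
    by (simp_all add: tendsto_diff tendsto_add)
qed

lemma vague_conv_pos_neg_iff:
  fixes \<mu>s :: "nat \<Rightarrow> 'a::topological_space set \<Rightarrow> real"
  assumes \<mu>s: "\<And>n. signed_borel_measure (\<mu>s n)" and \<mu>: "signed_borel_measure \<mu>"
  shows "(vague_conv (\<lambda>n. pos_part (\<mu>s n)) (pos_part \<mu>) \<and> vague_conv (\<lambda>n. neg_part (\<mu>s n)) (neg_part \<mu>))
    \<longleftrightarrow> (vague_conv \<mu>s \<mu> \<and> (\<forall>f. continuous_on UNIV f \<longrightarrow> compact (closure {x. f x \<noteq> 0}) \<longrightarrow>
      (\<lambda>n. variation_integral (\<mu>s n) f) \<longlonglongrightarrow> variation_integral \<mu> f))"
proof -
  have "((\<lambda>n. integral\<^sup>L (pos_measure (\<mu>s n)) f) \<longlonglongrightarrow> integral\<^sup>L (pos_measure \<mu>) f \<and>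
         (\<lambda>n. integral\<^sup>L (neg_measure (\<mu>s n)) f) \<longlonglongrightarrow> integral\<^sup>L (neg_measure \<mu>) f) \<longleftrightarrow>
        ((\<lambda>n. signed_integral (\<mu>s n) f) \<longlonglongrightarrow> signed_integral \<mu> f \<and>
         (\<lambda>n. variation_integral (\<mu>s n) f) \<longlonglongrightarrow> variation_integral \<mu> f)" for f
    unfolding signed_integral_def variation_integral_def by (rule tendsto_add_diff_iff)
  then show ?thesis
    unfolding vague_conv_def signed_integral_pos_part[OF \<mu>s] signed_integral_pos_part[OF \<mu>]
      signed_integral_neg_part[OF \<mu>s] signed_integral_neg_part[OF \<mu>]
    by blast
qed

theorem proposition2p7:
  fixes \<mu>s :: "nat \<Rightarrow> 'a::topological_space set \<Rightarrow> real" and \<mu> :: "'a set \<Rightarrow> real"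
  assumes "metrizable_space (euclidean :: 'a topology)"
    and "locally_compact_space (euclidean :: 'a topology)"
    and "\<And>n. signed_radon_measure (\<mu>s n)"
    and "signed_radon_measure \<mu>"
  shows "(vague_conv (\<lambda>n. pos_part (\<mu>s n)) (pos_part \<mu>) \<and>
          vague_conv (\<lambda>n. neg_part (\<mu>s n)) (neg_part \<mu>))
     \<longleftrightarrow> (vague_conv \<mu>s \<mu> \<and>
          (\<forall>K. compact K \<longrightarrow>
             limsup (\<lambda>n. ereal (variation (\<mu>s n) K)) \<le> ereal (variation \<mu> K)))"
proof -
  have H: "Hausdorff_space (euclidean :: 'a topology)"
    using assms(1) by (rule metrizable_imp_Hausdorff_space)
  have \<mu>s: "\<And>n. signed_borel_measure (\<mu>s n)" and \<mu>: "signed_borel_measure \<mu>"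
    using assms(3,4) by (simp_all add: signed_radon_measure_def)
  note vague_conv_pos_neg_iff[OF \<mu>s \<mu>]
  also have "(vague_conv \<mu>s \<mu> \<and> (\<forall>f. continuous_on UNIV f \<longrightarrow> compact (closure {x. f x \<noteq> 0}) \<longrightarrow>
      (\<lambda>n. variation_integral (\<mu>s n) f) \<longlonglongrightarrow> variation_integral \<mu> f)) \<longleftrightarrow>
    (vague_conv \<mu>s \<mu> \<and> (\<forall>K. compact K \<longrightarrow>
      limsup (\<lambda>n. ereal (variation (\<mu>s n) K)) \<le> ereal (variation \<mu> K)))"
    by (rule conj_cong[OF refl vague_conv_variation_iff_limsup[OF H assms(2) \<mu>s assms(4)]])
  finally show ?thesis .
qed

end
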